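(* Let $p,r$ be positive integers, $s=p+2r$, and write elements of $\mathbb{R}^{(p+s)\times p}$ as $X=(X_0;X_1;X_2;X_3)$ with blocks $X_0,X_1\in\mathbb{R}^{p\times p}$, $X_2,X_3\in\mathbb{R}^{r\times p}$; set $A=X_0-X_1$, $B=X_0+X_1$, $W=X_2+iX_3$. Let $\hat M$ be an element of the complexification $\mathfrak{so}(p,r)^{\mathbb{C}}$ and define $\hat\Phi:\mathbb{R}^{(p+s)\times p}\to\mathbb{C}^{(p+r)\times p}$ by $\hat\Phi(X)=\binom{A}{W}+\hat M\binom{B}{\bar W}$. Then the complex valued components of $\hat\Phi$ constitute an orthogonal harmonic family on $\mathbb{R}^{(p+s)\times p}$ equipped with the semi-Euclidean metric.
   Context: The semi-Euclidean metric on $\mathbb{R}^{(p+s)\times p}$ is $(X,Y)=\mathrm{trace}(X^tI_{ps}Y)$ with $I_{ps}=\mathrm{diag}(-I_p,I_s)$, i.e. the first $p$ rows (the block $X_0$) are negative. $\mathfrak{so}(p,r)^{\mathbb{C}}=\{M\in\mathbb{C}^{(p+r)\times(p+r)}: M^tI_{pr}+I_{pr}M=0\}$ with $I_{pr}=\mathrm{diag}(-I_p,I_r)$. For a semi-Riemannian manifold $(M,g)$ and complex functions $\phi,\psi$, $\tau(\phi)$ is the Laplace–Beltrami operator (extended complex-linearly) and $\kappa(\phi,\psi)=g(\mathrm{grad}\,\phi,\mathrm{grad}\,\psi)$ with $g$ extended complex-bilinearly. A set $\Omega$ of complex functions is an orthogonal harmonic family if $\tau(\phi)=0$ and $\kappa(\phi,\psi)=0$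 for all $\phi,\psi\in\Omega$. *)

theory Defs
  imports "HOL-Analysis.Analysis"
begin

text \<open>A point of R^{N x n} is represented as X :: nat => nat => real, X a j being the
entry in row a < N and column j < n (entries outside this range are irrelevant).\<close>

type_synonym rmat = "nat \<Rightarrow> nat \<Rightarrow> real"
type_synonym cmat = "nat \<Rightarrow> nat \<Rightarrow> complex"

definition sgn_pq :: "nat \<Rightarrow> nat \<Rightarrow> real" where
  "sgn_pq p a = (if a < p then -1 else 1)"

definition upd_entry :: "rmat \<Rightarrow> nat \<Rightarrow> nat \<Rightarrow> real \<Rightarrow> rmat" where
  "upd_entry X a j t = X(a := (X a)(j := t))"

definition partial :: "nat \<Rightarrow> nat \<Rightarrow> (rmat \<Rightarrow> complex) \<Rightarrow> rmat \<Rightarrow> complex" where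
  "partial a j f X = vector_derivative (\<lambda>t::real. f (upd_entry X a j t)) (at (X a j))"

text \<open>Laplace-Beltrami operator of the flat semi-Euclidean metric
 (X,Y) = trace(X^t I_{p,N-p} Y) on R^{N x n} (constant coefficients, g^{-1} = g).\<close>
definition tension :: "nat \<Rightarrow> nat \<Rightarrow> nat \<Rightarrow> (rmat \<Rightarrow> complex) \<Rightarrow> rmat \<Rightarrow> complex" where
  "tension p N n f X =
     (\<Sum>a<N. \<Sum>j<n. of_real (sgn_pq p a) * partial a j (partial a j f) X)"

definition conformality :: "nat \<Rightarrow> nat \<Rightarrow> nat \<Rightarrow> (rmat \<Rightarrow> complex) \<Rightarrow> (rmat \<Rightarrow> complex) \<Rightarrow> rmat \<Rightarrow> complex" where
  "conformality p N n f g X =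
     (\<Sum>a<N. \<Sum>j<n. of_real (sgn_pq p a) * partial a j f X * partial a j g X)"

definition orthogonal_harmonic_family ::
  "nat \<Rightarrow> nat \<Rightarrow> nat \<Rightarrow> (rmat \<Rightarrow> complex) set \<Rightarrow> bool" where
  "orthogonal_harmonic_family p N n \<Omega> \<longleftrightarrow>
     (\<forall>f\<in>\<Omega>. \<forall>X. tension p N n f X = 0) \<and>
     (\<forall>f\<in>\<Omega>. \<forall>g\<in>\<Omega>. \<forall>X. conformality p N n f g X = 0)"

definition in_so_C :: "nat \<Rightarrow> nat \<Rightarrow> cmat \<Rightarrow> bool" where
  "in_so_C p r M \<longleftrightarrow>
     (\<forall>i<p+r. \<forall>j<p+r. M j i * of_real (sgn_pq p j) + of_real (sgn_pq p i) * M i j = 0)"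

text \<open>Blocks X_0 (rows 0..p-1), X_1 (rows p..2p-1), X_2 (rows 2p..2p+r-1),
 X_3 (rows 2p+r..2p+2r-1).\<close>
definition blkA :: "nat \<Rightarrow> rmat \<Rightarrow> nat \<Rightarrow> nat \<Rightarrow> complex" where
  "blkA p X i j = of_real (X i j - X (p+i) j)"
definition blkB :: "nat \<Rightarrow> rmat \<Rightarrow> nat \<Rightarrow> nat \<Rightarrow> complex" where
  "blkB p X i j = of_real (X i j + X (p+i) j)"
definition blkW :: "nat \<Rightarrow> nat \<Rightarrow> rmat \<Rightarrow> nat \<Rightarrow> nat \<Rightarrow> complex" where
  "blkW p r X i j = Complex (X (2*p+i) j) (X (2*p+r+i) j)"

definition Phi_hat :: "nat \<Rightarrow> nat \<Rightarrow> cmat \<Rightarrow> rmat \<Rightarrow> nat \<Rightarrow> nat \<Rightarrow> complex" where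
  "Phi_hat p r M X k j =
     (if k < p then blkA p X k j else blkW p r X (k-p) j)
     + (\<Sum>l<p+r. M k l * (if l < p then blkB p X l j else cnj (blkW p r X (l-p) j)))"

end

(* Every component of Phi_hat is a real-linear function of X, so its partial derivatives are the
   constants Phi_hat(E_aj) at the coordinate matrices and its Laplacian vanishes. The conformality
   of the components (k,j) and (k',j') is then a sum over the E_aj in which only the column j
   contributes. Pairing the rows of X_0 with those of X_1 and the rows of X_2 with those of X_3,
   the row index l of M contributes
     sgn(l) ((d + m)(d' + m') - (d - m)(d' - m')) = 2 sgn(l) (d m' + d' m),
   with d = delta_kl, m = M_kl (for X_3 the sign comes from i^2 = -1). Summing over l leaves
   2 (sgn(k) M_k'k + sgn(k') M_kk'), which vanishes because M lies in so(p,r)^C. *)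
theory Submission
  imports Defs
begin

definition basis_rmat :: "nat \<Rightarrow> nat \<Rightarrow> rmat" where
  "basis_rmat a j = (\<lambda>b c. of_bool (b = a \<and> c = j))"

definition rmat_linear :: "(rmat \<Rightarrow> complex) \<Rightarrow> bool" where
  "rmat_linear f \<longleftrightarrow> (\<forall>X Y t. f (\<lambda>b c. X b c + t * Y b c) = f X + of_real t * f Y)"

lemma upd_entry_eq_add_basis:
  "upd_entry X a j t = (\<lambda>b c. X b c + (t - X a j) * basis_rmat a j b c)"
  by (auto simp: upd_entry_def basis_rmat_def fun_eq_iff)

lemma partial_rmat_linear:
  assumes "rmat_linear f"
  shows "partial a j f X = f (basis_rmat a j)"
proof -
  have "(\<lambda>t. f (upd_entry X a j t)) = (\<lambda>t. f X + of_real (t - X a j) * f (basis_rmat a j))"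
    using assms by (simp add: rmat_linear_def upd_entry_eq_add_basis)
  moreover have "((\<lambda>t. f X + of_real (t - X a j) * f (basis_rmat a j))
      has_vector_derivative f (basis_rmat a j)) (at (X a j))"
    by (auto intro!: derivative_eq_intros)
  ultimately show ?thesis
    unfolding partial_def by (simp add: vector_derivative_at)
qed

lemma partial_const: "partial a j (\<lambda>X. c) X = 0"
  unfolding partial_def by (rule vector_derivative_at) (rule has_vector_derivative_const)

lemma tension_rmat_linear:
  assumes "rmat_linear f"
  shows "tension p N n f X = 0"
proof -
  have "partial a j f = (\<lambda>_. f (basis_rmat a j))" for a j
    using partial_rmat_linear[OF assms] by blast
  then show ?thesis
    by (simp add: tension_def partial_const)
qed

lemma conformality_rmat_linear:
  assumes "rmat_linear f" and "rmat_linear g"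
  shows "conformality p N n f g X =
    (\<Sum>a<N. \<Sum>j<n. of_real (sgn_pq p a) * f (basis_rmat a j) * g (basis_rmat a j))"
  by (simp add: conformality_def partial_rmat_linear assms)

lemma rmat_linear_Phi_hat: "rmat_linear (\<lambda>X. Phi_hat p r M X k j)"
  unfolding rmat_linear_def
proof (intro allI)
  fix X Y :: rmat and t :: real
  let ?Z = "\<lambda>b c. X b c + t * Y b c"
  let ?col = "\<lambda>X l. if l < p then blkB p X l j else cnj (blkW p r X (l - p) j)"
  have blocks: "blkA p ?Z i j = blkA p X i j + of_real t * blkA p Y i j"
    "blkB p ?Z i j = blkB p X i j + of_real t * blkB p Y i j"
    "blkW p r ?Z i j = blkW p r X i j + of_real t * blkW p r Y i j" for i
    by (simp_all add: blkA_def blkB_def blkW_def Complex_eq algebra_simps)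
  have "(\<Sum>l<p + r. M k l * ?col ?Z l) =
      (\<Sum>l<p + r. M k l * ?col X l) + of_real t * (\<Sum>l<p + r. M k l * ?col Y l)"
    unfolding sum_distrib_left sum.distrib[symmetric]
    by (intro sum.cong) (simp_all add: blocks algebra_simps)
  then show "Phi_hat p r M ?Z k j = Phi_hat p r M X k j + of_real t * Phi_hat p r M Y k j"
    unfolding Phi_hat_def by (simp add: blocks algebra_simps)
qed

lemma complex_cnj_of_bool [simp]: "cnj (of_bool b) = of_bool b"
  by (cases b) simp_all

lemma blkA_basis:
  "blkA p (basis_rmat a c) i j = of_bool (c = j) * (of_bool (a = i) - of_bool (a = p + i))"
  by (simp add: blkA_def basis_rmat_def)

lemma blkB_basis:
  "blkB p (basis_rmat a c) i j = of_bool (c = j) * (of_bool (a = i) + of_bool (a = p + i))"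
  by (simp add: blkB_def basis_rmat_def)

lemma blkW_basis:
  "blkW p r (basis_rmat a c) i j =
     of_bool (c = j) * (of_bool (a = 2*p + i) + \<i> * of_bool (a = 2*p + r + i))"
  by (simp add: blkW_def basis_rmat_def Complex_eq)

lemmas Phi_hat_basis_unfold =
  Phi_hat_def blkA_basis blkB_basis blkW_basis if_distrib[of "\<lambda>x. _ * x"] sum.If_cases

lemma Phi_hat_basis_other_column:
  "c \<noteq> j \<Longrightarrow> Phi_hat p r M (basis_rmat a c) k j = 0"
  by (simp add: Phi_hat_basis_unfold cong: if_cong)

lemma Phi_hat_basis_X0:
  "i < p \<Longrightarrow> Phi_hat p r M (basis_rmat i j) k j = of_bool (k = i) + M k i"
  by (simp add: Phi_hat_basis_unfold cong: if_cong)

lemma Phi_hat_basis_X1: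
  "i < p \<Longrightarrow> Phi_hat p r M (basis_rmat (p+i) j) k j = - of_bool (k = i) + M k i"
  by (simp add: Phi_hat_basis_unfold cong: if_cong)

lemma Phi_hat_basis_X2:
  "i < r \<Longrightarrow> Phi_hat p r M (basis_rmat (2*p+i) j) k j = of_bool (k = p+i) + M k (p+i)"
  by (simp add: Phi_hat_basis_unfold cong: if_cong)

(* k < p + r is needed: for k = p + r + i the head term blkW (k - p) reads this row as its real part. *)
lemma Phi_hat_basis_X3:
  "i < r \<Longrightarrow> k < p + r \<Longrightarrow>
    Phi_hat p r M (basis_rmat (2*p+r+i) j) k j = \<i> * of_bool (k = p+i) - \<i> * M k (p+i)"
  by (simp add: Phi_hat_basis_unfold mult.left_commute[of _ \<i>] sum_distrib_left[symmetric] sum_negf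
      cong: if_cong)

lemma sum_lessThan_add: "(\<Sum>a<m + n. f a) = (\<Sum>a<m. f a) + (\<Sum>i<n. f (m + i :: nat))"
  by (induction n) (simp_all add: add_ac)

lemma sum_rows_paired:
  fixes F :: "nat \<Rightarrow> 'a::comm_monoid_add"
  shows "(\<Sum>a<p + (p + 2*r). F a) =
    (\<Sum>l<p + r. F (p + l) + (if l < p then F l else F (p + r + l)))"
proof -
  have "(\<Sum>l<p + r. if l < p then F l else F (p + r + l)) =
      (\<Sum>l<p. F l) + (\<Sum>i<r. F (p + r + (p + i)))"
    by (simp add: sum_lessThan_add)
  moreover have "p + (p + 2*r) = p + ((p + r) + r)"
    by simp
  ultimately show ?thesis
    by (simp only: sum.distrib sum_lessThan_add) (simp add: add_ac)
qed

lemma Phi_hat_basis_row_pair: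
  assumes "l < p + r" "k < p + r" "k' < p + r"
    and F: "\<And>a. F a = of_real (sgn_pq p a) *
      Phi_hat p r M (basis_rmat a j) k j * Phi_hat p r M (basis_rmat a j) k' j"
  shows "F (p + l) + (if l < p then F l else F (p + r + l)) =
    2 * of_real (sgn_pq p l) * (M k' l * of_bool (l = k) + M k l * of_bool (l = k'))"
proof (cases "l < p")
  case True
  then show ?thesis
    unfolding F Phi_hat_basis_X0[OF True] Phi_hat_basis_X1[OF True]
    by (simp add: sgn_pq_def algebra_simps)
next
  case False
  then obtain i where i: "l = p + i" "i < r"
    using assms(1) by (metis add_diff_inverse_nat add_less_cancel_left)
  then have rows: "p + l = 2*p + i" "p + r + l = 2*p + r + i"
    by simp_all
  show ?thesis
    unfolding F rows Phi_hat_basis_X2[OF \<open>i < r\<close>]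
      Phi_hat_basis_X3[OF \<open>i < r\<close> assms(2)] Phi_hat_basis_X3[OF \<open>i < r\<close> assms(3)]
    using i False by (simp add: sgn_pq_def algebra_simps)
qed

lemma conformality_Phi_hat:
  assumes "k < p + r" "k' < p + r" "j < p"
  shows "conformality p (p + (p + 2*r)) p (\<lambda>X. Phi_hat p r M X k j) (\<lambda>X. Phi_hat p r M X k' j') X =
    of_bool (j = j') * 2 * (of_real (sgn_pq p k) * M k' k + of_real (sgn_pq p k') * M k k')"
proof -
  define F where "F a = of_real (sgn_pq p a) *
    Phi_hat p r M (basis_rmat a j) k j * Phi_hat p r M (basis_rmat a j) k' j" for a
  have columns: "(\<Sum>c<p. of_real (sgn_pq p a) *
      Phi_hat p r M (basis_rmat a c) k j * Phi_hat p r M (basis_rmat a c) k' j') = of_bool (j = j') * F a"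
    for a
  proof -
    have "(\<Sum>c<p. of_real (sgn_pq p a) *
        Phi_hat p r M (basis_rmat a c) k j * Phi_hat p r M (basis_rmat a c) k' j') =
      (\<Sum>c<p. if c = j then of_bool (j = j') * F a else 0)"
      by (intro sum.cong) (auto simp: F_def Phi_hat_basis_other_column)
    then show ?thesis
      using assms(3) by simp
  qed
  have "(\<Sum>a<p + (p + 2*r). F a) =
      (\<Sum>l<p + r. 2 * of_real (sgn_pq p l) * (M k' l * of_bool (l = k) + M k l * of_bool (l = k')))"
    unfolding sum_rows_paired
    using Phi_hat_basis_row_pair[OF _ assms(1,2) F_def] by (intro sum.cong) simp_all
  also have "\<dots> = 2 * (of_real (sgn_pq p k) * M k' k + of_real (sgn_pq p k') * M k k')"
    using assms(1,2) by (simp add: distrib_left mult.assoc[symmetric] sum.distrib)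
  finally show ?thesis
    by (simp add: conformality_rmat_linear rmat_linear_Phi_hat columns sum_distrib_left)
qed

lemma in_so_C_sgn_pq:
  assumes "in_so_C p r M" "k < p + r" "k' < p + r"
  shows "of_real (sgn_pq p k) * M k' k + of_real (sgn_pq p k') * M k k' = 0"
proof -
  have "M k k' * of_real (sgn_pq p k) + of_real (sgn_pq p k') * M k' k = 0"
    using assms unfolding in_so_C_def by blast
  then show ?thesis
    by (cases "k < p"; cases "k' < p") (auto simp: sgn_pq_def add_eq_0_iff)
qed

theorem proposition5p1:
  fixes p r s :: nat and M :: cmat
  assumes "0 < p" and "0 < r" and "s = p + 2*r"
    and "in_so_C p r M"
  shows "orthogonal_harmonic_family p (p+s) p
           {(\<lambda>X. Phi_hat p r M X k j) | k j. k < p + r \<and> j < p}"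
  unfolding orthogonal_harmonic_family_def
proof (intro conjI ballI allI)
  fix f X assume "f \<in> {(\<lambda>X. Phi_hat p r M X k j) | k j. k < p + r \<and> j < p}"
  then show "tension p (p+s) p f X = 0"
    using tension_rmat_linear rmat_linear_Phi_hat by blast
next
  fix f g X
  assume "f \<in> {(\<lambda>X. Phi_hat p r M X k j) | k j. k < p + r \<and> j < p}"
    and "g \<in> {(\<lambda>X. Phi_hat p r M X k j) | k j. k < p + r \<and> j < p}"
  then obtain k j k' j' where "f = (\<lambda>X. Phi_hat p r M X k j)" "g = (\<lambda>X. Phi_hat p r M X k' j')"
    and "k < p + r" "k' < p + r" "j < p"
    by blast
  then show "conformality p (p+s) p f g X = 0"
    using assms(3) conformality_Phi_hat in_so_C_sgn_pq[OF assms(4)] by simp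
qed

end
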